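(* Consider problem (P) under the standing assumptions stated in the context, and suppose (P) is solvable. Then the set of all globally optimal solutions of (P) is $$\mathcal{S}=\{\tilde{\mathbf{x}}\in\mathbb{R}^n : \tilde{x}_j\le x^*_j(\mathbf{A},\mathbf{b}) \text{ for all } j \text{ with } k_j=0,\ \text{and } \tilde{x}_j=x^*_j(\mathbf{A},\mathbf{b}) \text{ for all } j \text{ with } k_j>0\}.$$
   Context: Max-plus algebra: $\mathbb{R}_{\max}=\mathbb{R}\cup\{-\infty\}$ with $a\oplus b=\max\{a,b\}$ and $a\otimes b=a+b$; $\varepsilon=-\infty$. For $\mathbf{A}=(a_{ij})\in\mathbb{R}_{\max}^{m\times n}$ and $\mathbf{x}=(x_j)\in\mathbb{R}^n$, $\mathbf{A}\otimes\mathbf{x}$ is the vector with $i$th component $F_i(\mathbf{x})=\max_{1\le j\le n}(a_{ij}+x_j)$, with $r+(-\infty)=-\infty$. Vectors are compared componentwise. Problem (P): given $\mathbf{A}=(a_{ij})\in\mathbb{R}_{\max}^{m\times n}$, reals $k_1,\dots,k_n\ge 0$ not all zero, and $c\in\mathbb{R}$, let $\mathcal{X}=\{\mathbf{x}\in\mathbb{R}^n : \sum_{j=1}^n k_jx_j=c\}$ and $F(\mathbf{x})=\mathbf{A}\otimes\mathbf{x}$. A point $\tilde{\mathbf{x}}\in\mathcal{X}$ is a globally optimal solution of (P) if $F(\mathbf{x})\ge F(\tilde{\mathbf{x}})$ componentwise for every $\mathbf{x}\in\mathcal{X}$; (P) is solvable if a globally optimal solution exists. Standing assumptions: (1) no row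 of $\mathbf{A}$ consists entirely of $-\infty$ entries; (2) if the $j$th column of $\mathbf{A}$ consists entirely of $-\infty$ entries, then $k_j>0$. Let $\mathcal{J}=\{j : k_j>0\}$. Define $\mathbf{b}=(b_i)$ by $b_i=-\infty$ if $a_{ij}=-\infty$ for some $j\in\mathcal{J}$, and otherwise $b_i=\frac{\sum_{j\in\mathcal{J}}k_ja_{ij}+c}{\sum_{j\in\mathcal{J}}k_j}$. Define $\mathbf{x}^*(\mathbf{A},\mathbf{b})=(x^*_j(\mathbf{A},\mathbf{b}))$ by $x^*_j(\mathbf{A},\mathbf{b})=\min_{1\le i\le m}(b_i-a_{ij})$, with the conventions, for $r\in\mathbb{R}$: $r-(-\infty)=+\infty$, $(-\infty)-r=-\infty$, $(-\infty)-(-\infty)=+\infty$; thus $x^*_j(\mathbf{A},\mathbf{b})\in\mathbb{R}\cup\{-\infty,+\infty\}$. *)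

theory Defs
  imports Complex_Main "HOL-Library.Extended_Real"
begin

text \<open>A matrix A in R_max^(m x n) is a function
  A :: nat => nat => ereal used on rows {..<m} and columns {..<n};
  entries are never +infinity. Vectors x in R^n are functions nat => real
  used on {..<n}.\<close>

definition mp_sub :: "ereal \<Rightarrow> ereal \<Rightarrow> ereal" where
  "mp_sub u v = (if v = -\<infinity> then \<infinity> else if u = -\<infinity> then -\<infinity> else u - v)"

definition mp_F :: "nat \<Rightarrow> (nat \<Rightarrow> nat \<Rightarrow> ereal) \<Rightarrow> (nat \<Rightarrow> real) \<Rightarrow> nat \<Rightarrow> ereal" where
  "mp_F n A x i = Max ((\<lambda>j. A i j + ereal (x j)) ` {..<n})"

definition feasible :: "nat \<Rightarrow> (nat \<Rightarrow> real) \<Rightarrow> real \<Rightarrow> (nat \<Rightarrow> real) \<Rightarrow> bool" where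
  "feasible n k c x \<longleftrightarrow> (\<Sum>j<n. k j * x j) = c"

definition glob_opt ::
  "nat \<Rightarrow> nat \<Rightarrow> (nat \<Rightarrow> nat \<Rightarrow> ereal) \<Rightarrow> (nat \<Rightarrow> real) \<Rightarrow> real \<Rightarrow> (nat \<Rightarrow> real) \<Rightarrow> bool" where
  "glob_opt m n A k c xt \<longleftrightarrow> feasible n k c xt \<and>
     (\<forall>x. feasible n k c x \<longrightarrow> (\<forall>i<m. mp_F n A x i \<ge> mp_F n A xt i))"

definition solvable ::
  "nat \<Rightarrow> nat \<Rightarrow> (nat \<Rightarrow> nat \<Rightarrow> ereal) \<Rightarrow> (nat \<Rightarrow> real) \<Rightarrow> real \<Rightarrow> bool" where
  "solvable m n A k c \<longleftrightarrow> (\<exists>xt. glob_opt m n A k c xt)"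

definition Jset :: "nat \<Rightarrow> (nat \<Rightarrow> real) \<Rightarrow> nat set" where
  "Jset n k = {j. j < n \<and> k j > 0}"

definition bvec :: "nat \<Rightarrow> (nat \<Rightarrow> nat \<Rightarrow> ereal) \<Rightarrow> (nat \<Rightarrow> real) \<Rightarrow> real \<Rightarrow> nat \<Rightarrow> ereal" where
  "bvec n A k c i =
     (if \<exists>j\<in>Jset n k. A i j = -\<infinity> then -\<infinity>
      else ereal (((\<Sum>j\<in>Jset n k. k j * real_of_ereal (A i j)) + c) / (\<Sum>j\<in>Jset n k. k j)))"

definition xstar :: "nat \<Rightarrow> (nat \<Rightarrow> nat \<Rightarrow> ereal) \<Rightarrow> (nat \<Rightarrow> ereal) \<Rightarrow> nat \<Rightarrow> ereal" where
  "xstar m A b j = Min ((\<lambda>i. mp_sub (b i) (A i j)) ` {..<m})"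

end

theory Submission
  imports Defs
begin

text \<open>For each row i, the infimum of F i over the feasible hyperplane is b i: if a i j = -\<infinity>
  for some j with k j > 0, F i is unbounded below there, which solvability excludes; otherwise
  the k-weighted average of the bounds F i x \<ge> a i j + x j over J gives F i x \<ge> b i, with equality
  attained. Hence x is optimal iff it is feasible and A \<otimes> x \<le> b, i.e. iff x \<le> x*(A,b) by
  residuation. Row 0 shows that the k-weighted sum of x* over J is at most c, so a feasible
  x \<le> x* must agree with x* on J, and any optimal solution shows that this sum equals c.\<close>

lemma sum_eq_sum_Jset:
  assumes "\<forall>j<n. k j \<ge> (0::real)"
  shows "(\<Sum>j<n. k j * x j) = (\<Sum>j\<in>Jset n k. k j * x j)"
proof (rule sum.mono_neutral_right)
  show "\<forall>j\<in>{..<n} - Jset n k. k j * x j = 0"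
    using assms by (auto simp: Jset_def)
qed (auto simp: Jset_def)

lemma feasible_iff_sum_Jset:
  "\<forall>j<n. k j \<ge> 0 \<Longrightarrow> feasible n k c x \<longleftrightarrow> (\<Sum>j\<in>Jset n k. k j * x j) = c"
  by (simp add: feasible_def sum_eq_sum_Jset)

lemma sum_Jset_pos:
  assumes "Jset n k \<noteq> {}"
  shows "0 < (\<Sum>j\<in>Jset n k. k j)"
proof -
  obtain j0 where "j0 \<in> Jset n k" using assms by auto
  then show ?thesis by (intro sum_pos2[of _ j0]) (auto simp: Jset_def)
qed

lemma sum_weighted_le_imp_eq:
  fixes x y k :: "'a \<Rightarrow> real"
  assumes "finite S" and "\<forall>j\<in>S. 0 < k j" and "\<forall>j\<in>S. x j \<le> y j"
    and "(\<Sum>j\<in>S. k j * y j) \<le> (\<Sum>j\<in>S. k j * x j)"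
  shows "\<forall>j\<in>S. x j = y j"
proof -
  have nonneg: "\<forall>j\<in>S. 0 \<le> k j * (y j - x j)"
    using assms(2,3) by (auto intro: mult_nonneg_nonneg)
  have "(\<Sum>j\<in>S. k j * (y j - x j)) \<le> 0"
    using assms(4) by (simp add: right_diff_distrib sum_subtractf)
  moreover have "0 \<le> (\<Sum>j\<in>S. k j * (y j - x j))"
    using nonneg by (intro sum_nonneg) blast
  ultimately have "(\<Sum>j\<in>S. k j * (y j - x j)) = 0" by linarith
  with nonneg have "\<forall>j\<in>S. k j * (y j - x j) = 0"
    by (simp add: sum_nonneg_eq_0_iff[OF assms(1)])
  with assms(2) show ?thesis by force
qed

lemma mp_F_ge: "j < n \<Longrightarrow> A i j + ereal (x j) \<le> mp_F n A x i"
  unfolding mp_F_def by (rule Max_ge) auto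

lemma mp_F_le_iff: "0 < n \<Longrightarrow> mp_F n A x i \<le> t \<longleftrightarrow> (\<forall>j<n. A i j + ereal (x j) \<le> t)"
  unfolding mp_F_def by (subst Max_le_iff) auto

lemma mp_F_real:
  assumes "j0 < n" and "A i j0 \<noteq> -\<infinity>" and "\<forall>j<n. A i j \<noteq> \<infinity>"
  obtains r where "mp_F n A x i = ereal r"
proof -
  have "mp_F n A x i \<in> (\<lambda>j. A i j + ereal (x j)) ` {..<n}"
    unfolding mp_F_def by (rule Max_in) (use assms(1) in auto)
  then obtain j where "j < n" "mp_F n A x i = A i j + ereal (x j)" by auto
  then have "mp_F n A x i \<noteq> \<infinity>" using assms(3) by auto
  moreover have "mp_F n A x i \<noteq> -\<infinity>"
    using mp_F_ge[OF assms(1), of A i x] assms(2) by (cases "A i j0") auto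
  ultimately show ?thesis using that by (cases "mp_F n A x i") auto
qed

lemma ereal_plus_diff_real_of_ereal:
  "a \<noteq> -\<infinity> \<Longrightarrow> a \<noteq> \<infinity> \<Longrightarrow> a + ereal (r - real_of_ereal a) = ereal r"
  by (cases a) auto

lemma le_mp_sub_iff: "a \<noteq> \<infinity> \<Longrightarrow> ereal r \<le> mp_sub u a \<longleftrightarrow> a + ereal r \<le> u"
  by (cases a; cases u) (auto simp: mp_sub_def ereal_le_minus_iff add.commute)

lemma le_xstar_iff: "0 < m \<Longrightarrow> t \<le> xstar m A B j \<longleftrightarrow> (\<forall>i<m. t \<le> mp_sub (B i) (A i j))"
  unfolding xstar_def by (subst Min_ge_iff) auto

lemma xstar_le: "i < m \<Longrightarrow> xstar m A B j \<le> mp_sub (B i) (A i j)"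
  unfolding xstar_def by (rule Min_le) auto

lemma xstar_in: "0 < m \<Longrightarrow> \<exists>i<m. xstar m A B j = mp_sub (B i) (A i j)"
proof -
  assume "0 < m"
  then have "xstar m A B j \<in> (\<lambda>i. mp_sub (B i) (A i j)) ` {..<m}"
    unfolding xstar_def by (intro Min_in) auto
  then show ?thesis by auto
qed

lemma mp_F_le_iff_le_xstar:
  assumes "0 < m" and "0 < n" and "\<forall>i<m. \<forall>j<n. A i j \<noteq> \<infinity>"
  shows "(\<forall>i<m. mp_F n A x i \<le> B i) \<longleftrightarrow> (\<forall>j<n. ereal (x j) \<le> xstar m A B j)"
  using assms by (auto simp: mp_F_le_iff le_xstar_iff le_mp_sub_iff)

lemma bvec_eq:
  "\<forall>j\<in>Jset n k. A i j \<noteq> -\<infinity> \<Longrightarrow>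
   bvec n A k c i = ereal (((\<Sum>j\<in>Jset n k. k j * real_of_ereal (A i j)) + c) / (\<Sum>j\<in>Jset n k. k j))"
  by (simp add: bvec_def)

lemma bvec_le_mp_F:
  assumes k: "\<forall>j<n. k j \<ge> 0" and J: "Jset n k \<noteq> {}"
    and fin: "\<forall>j\<in>Jset n k. A i j \<noteq> -\<infinity>" and ninf: "\<forall>j<n. A i j \<noteq> \<infinity>"
    and x: "feasible n k c x"
  shows "bvec n A k c i \<le> mp_F n A x i"
proof -
  let ?J = "Jset n k"
  obtain j0 where "j0 < n" "A i j0 \<noteq> -\<infinity>" using J fin by (auto simp: Jset_def)
  then obtain r where r: "mp_F n A x i = ereal r"
    by (rule mp_F_real[where A = A and i = i]) (use ninf in auto)
  have le: "real_of_ereal (A i j) + x j \<le> r" if "j \<in> ?J" for j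
    using mp_F_ge[of j n A i x] r fin ninf that by (cases "A i j") (auto simp: Jset_def)
  have "(\<Sum>j\<in>?J. k j * real_of_ereal (A i j)) + c = (\<Sum>j\<in>?J. k j * (real_of_ereal (A i j) + x j))"
    using x k by (simp add: feasible_iff_sum_Jset distrib_left sum.distrib)
  also have "\<dots> \<le> (\<Sum>j\<in>?J. k j) * r"
    unfolding sum_distrib_right
    by (rule sum_mono) (use le in \<open>auto simp: Jset_def intro!: mult_left_mono\<close>)
  finally show ?thesis
    using r sum_Jset_pos[OF J] fin by (simp add: bvec_eq divide_le_eq mult.commute)
qed

lemma mp_F_attains_bvec:
  assumes k: "\<forall>j<n. k j \<ge> 0" and J: "Jset n k \<noteq> {}"
    and fin: "\<forall>j\<in>Jset n k. A i j \<noteq> -\<infinity>" and ninf: "\<forall>j<n. A i j \<noteq> \<infinity>"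
  shows "\<exists>x. feasible n k c x \<and> mp_F n A x i \<le> bvec n A k c i"
proof -
  let ?J = "Jset n k"
  define b where "b = ((\<Sum>j\<in>?J. k j * real_of_ereal (A i j)) + c) / (\<Sum>j\<in>?J. k j)"
  define x where "x j = (if A i j = -\<infinity> then 0 else b - real_of_ereal (A i j))" for j
  have "(\<Sum>j\<in>?J. k j * x j) = (\<Sum>j\<in>?J. k j * (b - real_of_ereal (A i j)))"
    using fin by (intro sum.cong) (auto simp: x_def)
  also have "\<dots> = (\<Sum>j\<in>?J. k j) * b - (\<Sum>j\<in>?J. k j * real_of_ereal (A i j))"
    by (simp add: right_diff_distrib sum_subtractf sum_distrib_left mult.commute)
  also have "\<dots> = c" using sum_Jset_pos[OF J] by (simp add: b_def)
  finally have "feasible n k c x" using k by (simp add: feasible_iff_sum_Jset)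
  moreover have "0 < n" using J by (auto simp: Jset_def)
  then have "mp_F n A x i \<le> ereal b"
    using ninf by (auto simp: mp_F_le_iff x_def ereal_plus_diff_real_of_ereal)
  ultimately show ?thesis using fin by (auto simp: bvec_eq b_def)
qed

lemma mp_F_unbounded_below:
  assumes j0: "j0 < n" "k j0 > 0" "A i j0 = -\<infinity>" and ninf: "\<forall>j<n. A i j \<noteq> \<infinity>"
  shows "\<exists>x. feasible n k c x \<and> mp_F n A x i \<le> ereal M"
proof -
  define g where "g j = (if A i j = -\<infinity> then 0 else M - real_of_ereal (A i j))" for j
  define x where "x = g(j0 := (c - (\<Sum>j\<in>{..<n}-{j0}. k j * g j)) / k j0)"
  have "(\<Sum>j<n. k j * x j) = k j0 * x j0 + (\<Sum>j\<in>{..<n}-{j0}. k j * g j)"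
    using j0(1) by (subst sum.remove[of _ j0]) (auto simp: x_def intro!: sum.cong)
  then have "feasible n k c x" using j0(2) by (simp add: feasible_def x_def)
  moreover have "mp_F n A x i \<le> ereal M"
    using j0 ninf by (auto simp: mp_F_le_iff x_def g_def ereal_plus_diff_real_of_ereal)
  ultimately show ?thesis by blast
qed

lemma glob_opt_imp_finite_on_Jset:
  assumes opt: "glob_opt m n A k c x0" and i: "i < m"
    and row: "j1 < n" "A i j1 \<noteq> -\<infinity>" and ninf: "\<forall>j<n. A i j \<noteq> \<infinity>"
    and j: "j \<in> Jset n k"
  shows "A i j \<noteq> -\<infinity>"
proof
  assume "A i j = -\<infinity>"
  obtain r where r: "mp_F n A x0 i = ereal r"
    by (rule mp_F_real[where A = A and i = i, OF row ninf])
  obtain x where x: "feasible n k c x" "mp_F n A x i \<le> ereal (r - 1)"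
    using mp_F_unbounded_below[of j n k A i c "r - 1"] \<open>A i j = -\<infinity>\<close> j ninf
    by (auto simp: Jset_def)
  have "mp_F n A x0 i \<le> mp_F n A x i" using opt i x(1) by (simp add: glob_opt_def)
  with r x(2) have "ereal r \<le> ereal (r - 1)" by (metis order_trans)
  then show False by simp
qed

lemma glob_opt_iff_le_bvec:
  assumes k: "\<forall>j<n. k j \<ge> 0" and J: "Jset n k \<noteq> {}"
    and fin: "\<forall>i<m. \<forall>j\<in>Jset n k. A i j \<noteq> -\<infinity>" and ninf: "\<forall>i<m. \<forall>j<n. A i j \<noteq> \<infinity>"
  shows "glob_opt m n A k c x \<longleftrightarrow> feasible n k c x \<and> (\<forall>i<m. mp_F n A x i \<le> bvec n A k c i)"
proof
  assume opt: "glob_opt m n A k c x"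
  have "mp_F n A x i \<le> bvec n A k c i" if "i < m" for i
  proof -
    obtain x' where "feasible n k c x'" "mp_F n A x' i \<le> bvec n A k c i"
      using mp_F_attains_bvec[OF k J] fin ninf \<open>i < m\<close> by blast
    with opt \<open>i < m\<close> show ?thesis unfolding glob_opt_def by (meson order_trans)
  qed
  with opt show "feasible n k c x \<and> (\<forall>i<m. mp_F n A x i \<le> bvec n A k c i)"
    by (simp add: glob_opt_def)
next
  assume "feasible n k c x \<and> (\<forall>i<m. mp_F n A x i \<le> bvec n A k c i)"
  then show "glob_opt m n A k c x"
    using bvec_le_mp_F[OF k J] fin ninf unfolding glob_opt_def by (meson order_trans)
qed

lemma sum_Jset_xstar_le:
  assumes k: "\<forall>j<n. k j \<ge> 0" and J: "Jset n k \<noteq> {}" and i: "i < m"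
    and fin: "\<forall>j\<in>Jset n k. A i j \<noteq> -\<infinity>" and ninf: "\<forall>j<n. A i j \<noteq> \<infinity>"
    and xs: "\<forall>j\<in>Jset n k. xstar m A (bvec n A k c) j = ereal (xs j)"
  shows "(\<Sum>j\<in>Jset n k. k j * xs j) \<le> c"
proof -
  let ?J = "Jset n k"
  define b where "b = ((\<Sum>j\<in>?J. k j * real_of_ereal (A i j)) + c) / (\<Sum>j\<in>?J. k j)"
  have "xs j \<le> b - real_of_ereal (A i j)" if "j \<in> ?J" for j
    using xstar_le[OF i, of A "bvec n A k c" j] xs fin ninf that
    by (cases "A i j") (auto simp: mp_sub_def bvec_eq b_def Jset_def)
  then have "(\<Sum>j\<in>?J. k j * xs j) \<le> (\<Sum>j\<in>?J. k j * (b - real_of_ereal (A i j)))"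
    using k by (intro sum_mono mult_left_mono) (auto simp: Jset_def)
  also have "\<dots> = (\<Sum>j\<in>?J. k j) * b - (\<Sum>j\<in>?J. k j * real_of_ereal (A i j))"
    by (simp add: right_diff_distrib sum_subtractf sum_distrib_left mult.commute)
  also have "\<dots> = c" using sum_Jset_pos[OF J] by (simp add: b_def)
  finally show ?thesis .
qed

lemma xstar_real:
  assumes "0 < m" and "\<forall>i<m. B i \<noteq> -\<infinity> \<and> B i \<noteq> \<infinity>" and "\<forall>i<m. A i j \<noteq> -\<infinity> \<and> A i j \<noteq> \<infinity>"
  shows "xstar m A B j = ereal (real_of_ereal (xstar m A B j))"
proof -
  obtain i where "i < m" "xstar m A B j = mp_sub (B i) (A i j)"
    using xstar_in[OF assms(1)] by blast
  with assms(2,3) show ?thesis by (cases "B i"; cases "A i j") (auto simp: mp_sub_def)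
qed

theorem theorem4:
  fixes m n :: nat and A :: "nat \<Rightarrow> nat \<Rightarrow> ereal" and k :: "nat \<Rightarrow> real" and c :: real
  assumes "0 < m" and "0 < n"
    and "\<forall>i<m. \<forall>j<n. A i j \<noteq> \<infinity>"
    and "\<forall>j<n. k j \<ge> 0" and "\<exists>j<n. k j \<noteq> 0"
    and "\<forall>i<m. \<exists>j<n. A i j \<noteq> -\<infinity>"
    and "\<forall>j<n. (\<forall>i<m. A i j = -\<infinity>) \<longrightarrow> k j > 0"
    and "solvable m n A k c"
  shows "{xt. glob_opt m n A k c xt} =
         {xt. (\<forall>j<n. k j = 0 \<longrightarrow> ereal (xt j) \<le> xstar m A (bvec n A k c) j) \<and>
              (\<forall>j<n. k j > 0 \<longrightarrow> ereal (xt j) = xstar m A (bvec n A k c) j)}"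
proof -
  note m0 = assms(1) and n0 = assms(2) and ninf = assms(3) and k = assms(4)
  let ?J = "Jset n k" and ?B = "bvec n A k c"
  define xs where "xs j = real_of_ereal (xstar m A ?B j)" for j
  obtain x0 where opt0: "glob_opt m n A k c x0" using assms(8) by (auto simp: solvable_def)
  have J: "?J \<noteq> {}" using assms(5) k by (force simp: Jset_def)
  have fin: "\<forall>i<m. \<forall>j\<in>?J. A i j \<noteq> -\<infinity>"
    using glob_opt_imp_finite_on_Jset[OF opt0] assms(6) ninf by metis
  have opt_iff: "glob_opt m n A k c x \<longleftrightarrow> feasible n k c x \<and> (\<forall>j<n. ereal (x j) \<le> xstar m A ?B j)" for x
    using glob_opt_iff_le_bvec[OF k J fin ninf] mp_F_le_iff_le_xstar[OF m0 n0 ninf] by simp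
  have xs: "\<forall>j\<in>?J. xstar m A ?B j = ereal (xs j)"
    unfolding xs_def using xstar_real[OF m0] fin ninf by (simp add: bvec_eq Jset_def)
  have sum_le: "(\<Sum>j\<in>?J. k j * xs j) \<le> c"
    using sum_Jset_xstar_le[OF k J m0] fin ninf xs m0 by blast
  have opt_eq: "\<forall>j\<in>?J. x j = xs j" if "glob_opt m n A k c x" for x
    using that sum_le xs by (intro sum_weighted_le_imp_eq)
      (auto simp: opt_iff feasible_iff_sum_Jset[OF k] Jset_def)
  have sum_eq: "(\<Sum>j\<in>?J. k j * xs j) = c"
    using opt0 opt_eq[OF opt0] by (simp add: opt_iff feasible_iff_sum_Jset[OF k])
  show ?thesis
  proof (intro set_eqI iffI; simp only: mem_Collect_eq)
    fix x assume "glob_opt m n A k c x"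
    then show "(\<forall>j<n. k j = 0 \<longrightarrow> ereal (x j) \<le> xstar m A ?B j) \<and>
               (\<forall>j<n. 0 < k j \<longrightarrow> ereal (x j) = xstar m A ?B j)"
      using opt_eq xs by (auto simp: opt_iff Jset_def)
  next
    fix x assume h: "(\<forall>j<n. k j = 0 \<longrightarrow> ereal (x j) \<le> xstar m A ?B j) \<and>
                     (\<forall>j<n. 0 < k j \<longrightarrow> ereal (x j) = xstar m A ?B j)"
    have "\<forall>j<n. ereal (x j) \<le> xstar m A ?B j"
      using h k by (metis order.order_iff_strict)
    moreover have "(\<Sum>j\<in>?J. k j * x j) = (\<Sum>j\<in>?J. k j * xs j)"
      using h xs by (intro sum.cong) (auto simp: Jset_def)
    ultimately show "glob_opt m n A k c x"
      using sum_eq by (simp add: opt_iff feasible_iff_sum_Jset[OF k])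
  qed
qed

end
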